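(* Let $J=\{j_1<\dots<j_k\}\subseteq[n]$ with complement $[n]\setminus J=\{h_1<\dots<h_{n-k}\}$, and let $\psi:\mathbb{R}^n\to\mathbb{R}^n$ be the coordinate permutation $\psi(x_1,\dots,x_n)=(x_{h_1},\dots,x_{h_{n-k}},x_{j_1},\dots,x_{j_k})$. Then $\psi$ maps the bridge polytope $\mathrm{Br}_J$ isomorphically onto the Bruhat interval polytope $\mathsf{Q}_{e,\pi(J)^{-1}}$. More precisely, $\psi$ sends the vertex $(z(1),\dots,z(n))$, $z\in S_J$, to the point of the permutation $z\circ\pi(J)^{-1}$, and $z\mapsto z\circ\pi(J)^{-1}$ is a bijection from $S_J$ onto the strong Bruhat interval $[e,\pi(J)^{-1}]=\{w\in S_n: e\le w\le \pi(J)^{-1}\}$; in particular the vertices $\pi(J)$ and $e$ of $\mathrm{Br}_J$ go to $e$ and $\pi(J)^{-1}$ respectively.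
   Context: For $J\subseteq[n]$, $S_J=\{\pi\in S_n:\ \pi(j)\ge j \text{ for } j\in J,\ \pi(j)\le j \text{ for } j\notin J\}$ and $\mathrm{Br}_J=\operatorname{conv}\{(\pi(1),\dots,\pi(n)):\pi\in S_J\}\subset\mathbb{R}^n$. For $J=\{j_1<\dots<j_k\}$ with complement $\{h_1<\dots<h_{n-k}\}$, $\pi(J)\in S_n$ is the permutation with $\pi(J)(h_i)=i$ for $1\le i\le n-k$ and $\pi(J)(j_i)=n-k+i$ for $1\le i\le k$; thus $\pi(J)^{-1}=(h_1,\dots,h_{n-k},j_1,\dots,j_k)$ in one-line notation. For $u\le v$ in the strong Bruhat order on $S_n$, the Bruhat interval polytope is $\mathsf{Q}_{u,v}=\operatorname{conv}\{(z(1),\dots,z(n)): z\in S_n,\ u\le z\le v\}$, where $\le$ is the strong Bruhat order. *)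

theory Defs
  imports "HOL-Analysis.Analysis"
begin

text \<open>Permutations of [n] = {1..n} are functions nat => nat permuting {1..n}
  (fixing everything outside). Points of R^n are functions nat => real,
  with coordinates indexed by 1..n and value 0 outside.\<close>

definition Sn :: "nat \<Rightarrow> (nat \<Rightarrow> nat) set" where
  "Sn n = {p. p permutes {1..n}}"

definition SJ :: "nat \<Rightarrow> nat set \<Rightarrow> (nat \<Rightarrow> nat) set" where
  "SJ n J = {p \<in> Sn n. (\<forall>j\<in>J. p j \<ge> j) \<and> (\<forall>j\<in>{1..n} - J. p j \<le> j)}"

definition pt :: "nat \<Rightarrow> (nat \<Rightarrow> nat) \<Rightarrow> (nat \<Rightarrow> real)" where
  "pt n z = (\<lambda>i. if i \<in> {1..n} then real (z i) else 0)"

definition convR :: "(nat \<Rightarrow> real) set \<Rightarrow> (nat \<Rightarrow> real) set" where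
  "convR S = {x. \<exists>F u. finite F \<and> F \<subseteq> S \<and> F \<noteq> {} \<and> (\<forall>y\<in>F. u y \<ge> 0) \<and>
      sum u F = 1 \<and> x = (\<lambda>i. \<Sum>y\<in>F. u y * y i)}"

definition Br :: "nat \<Rightarrow> nat set \<Rightarrow> (nat \<Rightarrow> real) set" where
  "Br n J = convR (pt n ` SJ n J)"

text \<open>pi(J): pi(J)(h_i) = i, pi(J)(j_i) = n - k + i.\<close>
definition piJ :: "nat \<Rightarrow> nat set \<Rightarrow> nat \<Rightarrow> nat" where
  "piJ n J x = (if x \<in> {1..n} - J then card {y \<in> {1..n} - J. y \<le> x}
               else if x \<in> J then n - card J + card {y \<in> J. y \<le> x}
               else x)"

inductive bruhat_le :: "nat \<Rightarrow> (nat \<Rightarrow> nat) \<Rightarrow> (nat \<Rightarrow> nat) \<Rightarrow> bool" for n where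
  refl: "u \<in> Sn n \<Longrightarrow> bruhat_le n u u"
| step: "bruhat_le n u v \<Longrightarrow> i \<in> {1..n} \<Longrightarrow> j \<in> {1..n} \<Longrightarrow> i < j \<Longrightarrow> v i < v j
          \<Longrightarrow> bruhat_le n u (v(i := v j, j := v i))"

definition Q :: "nat \<Rightarrow> (nat \<Rightarrow> nat) \<Rightarrow> (nat \<Rightarrow> nat) \<Rightarrow> (nat \<Rightarrow> real) set" where
  "Q n u v = convR (pt n ` {z \<in> Sn n. bruhat_le n u z \<and> bruhat_le n z v})"

definition psi :: "nat \<Rightarrow> nat set \<Rightarrow> (nat \<Rightarrow> real) \<Rightarrow> (nat \<Rightarrow> real)" where
  "psi n J x = (let L = sorted_list_of_set ({1..n} - J) @ sorted_list_of_set J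
                in (\<lambda>i. if i \<in> {1..n} then x (L ! (i - 1)) else 0))"

end

theory Submission
  imports Defs
begin

text \<open>The map \<open>\<psi>\<close> permutes coordinates by \<open>g = \<pi>(J)\<^sup>-\<^sup>1\<close>, so it sends the point of \<open>z\<close>
  to the point of \<open>z \<circ> g\<close>; being linear and injective, it commutes with convex hulls. Since
  \<open>g\<close> maps the first \<open>m = n - |J|\<close> positions onto \<open>[n] - J\<close> and the others onto \<open>J\<close>, a permutation
  \<open>z\<close> lies in \<open>S\<^sub>J\<close> iff \<open>w = z \<circ> g\<close> satisfies \<open>w(a) \<le> g(a)\<close> for \<open>a \<le> m\<close> and \<open>w(a) \<ge> g(a)\<close>
  for \<open>a > m\<close>. As \<open>g\<close> is increasing on both blocks, these bounds cut out exactly the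
  Bruhat interval \<open>[e, g]\<close>: they survive going down a Bruhat step, and any permutation obeying
  them other than \<open>g\<close> has an up-step that still obeys them. Along up-steps the weight
  \<open>\<Sum> a \<cdot> w(a)\<close> strictly decreases, which makes both this climb and the descent from any
  permutation to \<open>e\<close> terminate.\<close>

lemma card_le_nth_sorted:
  assumes "sorted_wrt (<) (xs::nat list)" "i < length xs"
  shows "card {y \<in> set xs. y \<le> xs!i} = Suc i"
proof -
  have "{y \<in> set xs. y \<le> xs!i} = (!) xs ` {..i}"
  proof (intro equalityI subsetI)
    fix y assume "y \<in> {y \<in> set xs. y \<le> xs!i}"
    then obtain j where j: "j < length xs" "y = xs!j" "xs!j \<le> xs!i"
      by (auto simp: in_set_conv_nth)
    then have "j \<le> i"
      using sorted_wrt_nth_less[OF assms(1), of i j] assms(2) by (metis leD le_less_linear)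
    then show "y \<in> (!) xs ` {..i}" using j by auto
  next
    fix y assume "y \<in> (!) xs ` {..i}"
    then obtain j where "j \<le> i" "y = xs!j" by auto
    then show "y \<in> {y \<in> set xs. y \<le> xs!i}"
      using sorted_wrt_nth_less[OF assms(1), of j i] assms(2)
      by (cases "j = i") (auto simp: nth_mem)
  qed
  moreover have "inj_on ((!) xs) {..i}"
    using assms by (intro inj_on_nth) (auto simp: strict_sorted_iff)
  ultimately show ?thesis by (simp add: card_image)
qed

lemma Sn_swap:
  assumes "v \<in> Sn n" "i \<in> {1..n}" "j \<in> {1..n}"
  shows "v(i := v j, j := v i) \<in> Sn n"
proof -
  have "v(i := v j, j := v i) = v \<circ> Transposition.transpose i j"
    by (auto simp: fun_eq_iff Transposition.transpose_def)
  then show ?thesis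
    using assms permutes_compose[OF permutes_swap_id[of i "{1..n}" j]] unfolding Sn_def by auto
qed

lemma Sn_preimage:
  assumes "w \<in> Sn n" "y \<in> {1..n}"
  obtains r where "r \<in> {1..n}" "w r = y"
  using assms permutes_image[of w "{1..n}"] unfolding Sn_def by (metis imageE mem_Collect_eq)

lemma bruhat_le_Sn: "bruhat_le n u v \<Longrightarrow> u \<in> Sn n \<and> v \<in> Sn n"
  by (induction rule: bruhat_le.induct) (use Sn_swap in blast)+

lemma bruhat_le_trans: "bruhat_le n v w \<Longrightarrow> bruhat_le n u v \<Longrightarrow> bruhat_le n u w"
  by (induction rule: bruhat_le.induct) (auto intro: bruhat_le.step)

lemma bruhat_le_swap:
  assumes "v \<in> Sn n" "i \<in> {1..n}" "j \<in> {1..n}" "i < j" "v i < v j"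
  shows "bruhat_le n v (v(i := v j, j := v i))"
  using bruhat_le.step[OF bruhat_le.refl[OF assms(1)] assms(2-5)] .

definition weight :: "nat \<Rightarrow> (nat \<Rightarrow> nat) \<Rightarrow> nat" where
  "weight n w = (\<Sum>a\<in>{1..n}. a * w a)"

lemma weight_swap_less:
  assumes "i \<in> {1..n}" "j \<in> {1..n}" "i < j" "w i < w j"
  shows "weight n (w(i := w j, j := w i)) < weight n w"
proof -
  let ?S = "{1..n} - {i, j}"
  have S: "{1..n} = insert i (insert j ?S)" using assms by auto
  have rest: "(\<Sum>a\<in>?S. a * (w(i := w j, j := w i)) a) = (\<Sum>a\<in>?S. a * w a)"
    by (rule sum.cong) auto
  obtain d e where "j = i + d" "d > 0" "w j = w i + e" "e > 0"
    using assms by (metis less_imp_add_positive)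
  then have "i * w j + j * w i < i * w i + j * w j" by (simp add: algebra_simps)
  then show ?thesis
    unfolding weight_def using assms rest by (subst (1 2) S) (simp add: sum.insert_if)
qed

lemma weight_le: "w \<in> Sn n \<Longrightarrow> weight n w \<le> n * n * n"
proof -
  assume "w \<in> Sn n"
  then have "\<And>a. a \<in> {1..n} \<Longrightarrow> w a \<le> n"
    unfolding Sn_def using permutes_in_image by fastforce
  then have "weight n w \<le> (\<Sum>a\<in>{1..n}. n * n)"
    unfolding weight_def by (intro sum_mono) (simp add: mult_le_mono)
  then show ?thesis by simp
qed

text \<open>The least moved point \<open>a\<close> of \<open>w\<close> satisfies \<open>w a > a\<close>, and \<open>a\<close> itself is the image of
  some later position.\<close>
lemma Sn_exists_inversion:
  assumes "w \<in> Sn n" "w \<noteq> id"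
  obtains i j where "i \<in> {1..n}" "j \<in> {1..n}" "i < j" "w j < w i"
proof -
  have wp: "w permutes {1..n}" using assms unfolding Sn_def by auto
  obtain a where a: "w a \<noteq> a" "\<forall>b<a. w b = b"
    using assms exists_least_iff[of "\<lambda>a. w a \<noteq> a"] by (auto simp: fun_eq_iff)
  have ain: "a \<in> {1..n}" using a permutes_not_in[OF wp] by auto
  obtain r where r: "r \<in> {1..n}" "w r = a" using Sn_preimage[OF assms(1) ain] .
  have "a < r" using r a by (metis linorder_neqE_nat)
  have "\<not> w a < a"
    using a permutes_inj[OF wp] by (metis inj_eq)
  then have "a < w a" using a by auto
  then show ?thesis using that ain r \<open>a < r\<close> by blast
qed

lemma bruhat_le_id: "w \<in> Sn n \<Longrightarrow> bruhat_le n id w"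
proof (induction "n * n * n - weight n w" arbitrary: w rule: less_induct)
  case less
  show ?case
  proof (cases "w = id")
    case True
    then show ?thesis using bruhat_le.refl[of id n] by (simp add: Sn_def permutes_id)
  next
    case False
    obtain i j where ij: "i \<in> {1..n}" "j \<in> {1..n}" "i < j" "w j < w i"
      using Sn_exists_inversion[OF less.prems False] by blast
    define u where "u = w(i := w j, j := w i)"
    have uS: "u \<in> Sn n" unfolding u_def using Sn_swap[OF less.prems ij(1,2)] .
    have wu: "w = u(i := u j, j := u i)" unfolding u_def using ij by (auto simp: fun_eq_iff)
    have "weight n w < weight n u" using weight_swap_less[of i n j u] ij wu unfolding u_def by auto
    with weight_le[OF uS] have "bruhat_le n id u" using less.hyps uS by force
    from bruhat_le.step[OF this ij(1,2,3)] show ?thesis using ij wu unfolding u_def by auto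
  qed
qed

lemma convR_image:
  fixes h :: "(nat \<Rightarrow> real) \<Rightarrow> (nat \<Rightarrow> real)"
  assumes inj: "inj_on h A"
    and lin: "\<And>F u. h (\<lambda>i. \<Sum>y\<in>F. u y * y i) = (\<lambda>i. \<Sum>y\<in>F. u y * h y i)"
  shows "h ` convR A = convR (h ` A)"
proof (intro equalityI subsetI)
  fix x assume "x \<in> h ` convR A"
  then obtain F u where F: "finite F" "F \<subseteq> A" "F \<noteq> {}" "\<forall>y\<in>F. u y \<ge> 0" "sum u F = 1"
    "x = h (\<lambda>i. \<Sum>y\<in>F. u y * y i)" unfolding convR_def by blast
  have injF: "inj_on h F" using inj F(2) inj_on_subset by blast
  define u' where "u' = (\<lambda>z. u (the_inv_into F h z))"
  have u'h: "\<And>y. y \<in> F \<Longrightarrow> u' (h y) = u y" unfolding u'_def using the_inv_into_f_f[OF injF] by simp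
  have "x = (\<lambda>i. \<Sum>z\<in>h ` F. u' z * z i)"
    using F(6) lin by (subst sum.reindex[OF injF]) (simp add: u'h)
  moreover have "sum u' (h ` F) = 1" using F(5) by (subst sum.reindex[OF injF]) (simp add: u'h)
  moreover have "\<forall>z\<in>h ` F. u' z \<ge> 0" using F(4) u'h by auto
  ultimately show "x \<in> convR (h ` A)" unfolding convR_def using F
    by (intro CollectI exI[of _ "h ` F"] exI[of _ u']) auto
next
  fix x assume "x \<in> convR (h ` A)"
  then obtain F' u where F': "finite F'" "F' \<subseteq> h ` A" "F' \<noteq> {}" "\<forall>y\<in>F'. u y \<ge> 0"
    "sum u F' = 1" "x = (\<lambda>i. \<Sum>y\<in>F'. u y * y i)" unfolding convR_def by blast
  define F where "F = {y \<in> A. h y \<in> F'}"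
  have hF: "h ` F = F'" using F'(2) unfolding F_def by auto
  have injF: "inj_on h F" using inj unfolding F_def by (rule inj_on_subset) auto
  have "x = h (\<lambda>i. \<Sum>y\<in>F. u (h y) * y i)"
    unfolding F'(6) hF[symmetric] lin by (simp add: sum.reindex[OF injF])
  moreover have "(\<lambda>i. \<Sum>y\<in>F. u (h y) * y i) \<in> convR A" unfolding convR_def
  proof (intro CollectI exI[of _ F] exI[of _ "u \<circ> h"] conjI)
    show "finite F" using F'(1) hF injF finite_imageD by blast
    show "sum (u \<circ> h) F = 1" using F'(5) hF sum.reindex[OF injF, of u] by simp
  qed (use F'(3,4) hF in \<open>auto simp: F_def\<close>)
  ultimately show "x \<in> h ` convR A" by blast
qed

locale grassmannian =
  fixes n m :: nat and g :: "nat \<Rightarrow> nat"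
  assumes g_permutes: "g permutes {1..n}"
    and mono_head: "strict_mono_on {1..m} g"
    and mono_tail: "strict_mono_on {m<..n} g"
begin

definition fits :: "nat \<Rightarrow> nat \<Rightarrow> bool" where
  "fits a x \<longleftrightarrow> (a \<le> m \<longrightarrow> x \<le> g a) \<and> (m < a \<longrightarrow> g a \<le> x)"

definition fitting :: "(nat \<Rightarrow> nat) \<Rightarrow> bool" where
  "fitting w \<longleftrightarrow> w \<in> Sn n \<and> (\<forall>a\<in>{1..n}. fits a (w a))"

lemma g_Sn: "g \<in> Sn n"
  using g_permutes unfolding Sn_def by simp

lemma g_inj: "g a = g b \<Longrightarrow> a = b"
  using permutes_inj[OF g_permutes] by (meson injD)

lemma g_in: "a \<in> {1..n} \<Longrightarrow> g a \<in> {1..n}"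
  using permutes_in_image[OF g_permutes] by blast

lemma g_less_head: "a \<in> {1..n} \<Longrightarrow> a < b \<Longrightarrow> b \<le> m \<Longrightarrow> g a < g b"
  using strict_mono_onD[OF mono_head] by simp

lemma g_less_tail: "m < a \<Longrightarrow> a < b \<Longrightarrow> b \<in> {1..n} \<Longrightarrow> g a < g b"
  using strict_mono_onD[OF mono_tail] by simp

lemma fitting_g: "fitting g"
  unfolding fitting_def fits_def using g_Sn by auto

definition fitting_up_step :: "(nat \<Rightarrow> nat) \<Rightarrow> nat \<Rightarrow> nat \<Rightarrow> bool" where
  "fitting_up_step w i j \<longleftrightarrow>
     i \<in> {1..n} \<and> j \<in> {1..n} \<and> i < j \<and> w i < w j \<and> fitting (w(i := w j, j := w i))"

lemma fitting_up_stepI: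
  assumes "fitting w" "i \<in> {1..n}" "j \<in> {1..n}" "i < j" "w i < w j" "fits i (w j)" "fits j (w i)"
  shows "fitting_up_step w i j"
  using assms Sn_swap[of w n i j] unfolding fitting_up_step_def fitting_def by auto

text \<open>For \<open>i \<le> m\<close> the bound at \<open>i\<close> follows from \<open>v i < v j \<le> g i\<close>; for \<open>i > m\<close> both
  positions lie in the tail block and \<open>g i < g j \<le> v i\<close>. The bound at \<open>j\<close> is symmetric.\<close>
lemma fitting_bruhat_down:
  assumes "fitting (v(i := v j, j := v i))" "v \<in> Sn n"
    and ij: "i \<in> {1..n}" "j \<in> {1..n}" "i < j" "v i < v j"
  shows "fitting v"
proof -
  let ?v = "v(i := v j, j := v i)"
  have fit: "\<And>a. a \<in> {1..n} \<Longrightarrow> fits a (?v a)" using assms(1) unfolding fitting_def by blast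
  have "fits i (v j)" "fits j (v i)" using fit[OF ij(1)] fit[OF ij(2)] ij(3) by simp_all
  then have "fits i (v i)" "fits j (v j)"
    using ij g_less_head[OF ij(1,3)] g_less_tail[of i j] unfolding fits_def by force+
  moreover have "fits a (v a)" if "a \<in> {1..n}" "a \<noteq> i" "a \<noteq> j" for a
    using fit[OF that(1)] that by simp
  ultimately show ?thesis using assms(2) unfolding fitting_def by metis
qed

lemma fitting_bruhat_le: "bruhat_le n u v \<Longrightarrow> fitting v \<Longrightarrow> fitting u"
proof (induction rule: bruhat_le.induct)
  case (step u v i j)
  then show ?case using fitting_bruhat_down bruhat_le_Sn by blast
qed simp

lemma fitting_first_mismatch:
  assumes "fitting w" "w \<noteq> g"
  obtains p where "p \<in> {1..n}" "p \<le> m" "w p < g p" "\<And>b. b \<in> {1..n} \<Longrightarrow> b < p \<Longrightarrow> w b = g b"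
proof -
  have wS: "w \<in> Sn n" and fit: "\<And>a. a \<in> {1..n} \<Longrightarrow> fits a (w a)"
    using assms(1) unfolding fitting_def by blast+
  have "\<exists>a. a \<in> {1..n} \<and> w a \<noteq> g a"
  proof (rule ccontr)
    assume "\<nexists>a. a \<in> {1..n} \<and> w a \<noteq> g a"
    then have "w = g"
      using wS permutes_not_in[OF g_permutes] permutes_not_in[of w "{1..n}"]
      unfolding Sn_def by (metis ext mem_Collect_eq)
    then show False using assms(2) by simp
  qed
  then obtain p where p: "p \<in> {1..n}" "w p \<noteq> g p"
    and agree: "\<And>b. b \<in> {1..n} \<Longrightarrow> b < p \<Longrightarrow> w b = g b"
    using exists_least_iff[of "\<lambda>a. a \<in> {1..n} \<and> w a \<noteq> g a"] by blast
  obtain q where q: "q \<in> {1..n}" "w q = g p" using Sn_preimage[OF wS g_in[OF p(1)]] .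
  have "q \<noteq> p" using p(2) q(2) by auto
  moreover have "\<not> q < p" using agree[OF q(1)] q(2) g_inj[of q p] \<open>q \<noteq> p\<close> by auto
  ultimately have "p < q" by simp
  have "p \<le> m"
  proof (rule ccontr)
    assume "\<not> p \<le> m"
    then show False using fit[OF q(1)] q \<open>p < q\<close> g_less_tail[of p q] unfolding fits_def by auto
  qed
  moreover have "w p < g p" using fit[OF p(1)] p(2) \<open>p \<le> m\<close> unfolding fits_def by auto
  ultimately show ?thesis using that p(1) agree by blast
qed

lemma exists_fitting_up_step_tail:
  assumes "fitting w" and p: "p \<in> {1..n}" "p \<le> m" and pq: "p < q" "m < q"
    and q: "q \<in> {1..n}" "w q = g p" "w p < g q" "g q < g p"
    and r: "r \<in> {1..n}" "w r = g q" "p < r"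
  shows "\<exists>i j. fitting_up_step w i j"
proof (cases "r \<le> m")
  case True
  have "fits p (w r)" using r(2) q(4) p(2) unfolding fits_def by simp
  moreover have "fits r (w p)"
    using True q(3,4) g_less_head[OF p(1) r(3)] unfolding fits_def by simp
  ultimately show ?thesis using fitting_up_stepI[OF assms(1) p(1) r(1) r(3)] q(3) r(2) by auto
next
  case False
  have "fits r (w r)" using assms(1) r(1) unfolding fitting_def by blast
  then have fit_r: "g r \<le> g q" using r(2) False unfolding fits_def by simp
  then have "\<not> q < r" using g_less_tail[OF pq(2) _ r(1)] by (meson leD)
  moreover have "r \<noteq> q" using r(2) q(2) q(4) by auto
  ultimately have rq: "r < q" by simp
  have "fits r (w q)" using False q(2) fit_r q(4) unfolding fits_def by simp
  moreover have "fits q (w r)" using r(2) unfolding fits_def by simp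
  ultimately show ?thesis using fitting_up_stepI[OF assms(1) r(1) q(1) rq] r(2) q(2) q(4) by auto
qed

text \<open>With \<open>p\<close> the first position where \<open>w\<close> and \<open>g\<close> differ, the value \<open>g p\<close> sits at some
  later position \<open>q\<close>. Swapping \<open>p\<close> and \<open>q\<close> works unless \<open>q > m\<close> and \<open>w p < g q\<close>; then the
  value \<open>g q\<close> sits at a position \<open>r > p\<close>, and either \<open>(p, r)\<close> or \<open>(r, q)\<close> can be swapped.\<close>
lemma exists_fitting_up_step:
  assumes "fitting w" "w \<noteq> g"
  shows "\<exists>i j. fitting_up_step w i j"
proof -
  have wS: "w \<in> Sn n" and fit: "\<And>a. a \<in> {1..n} \<Longrightarrow> fits a (w a)"
    using assms(1) unfolding fitting_def by blast+
  obtain p where p: "p \<in> {1..n}" "p \<le> m" "w p < g p"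
    and agree: "\<And>b. b \<in> {1..n} \<Longrightarrow> b < p \<Longrightarrow> w b = g b"
    using fitting_first_mismatch[OF assms] by blast
  have later: "p < r" if "r \<in> {1..n}" "w r = g y" "p \<le> y" "r \<noteq> p" for r y
    using that agree g_inj by (metis le_less_trans linorder_neqE_nat not_less)
  obtain q where q: "q \<in> {1..n}" "w q = g p" using Sn_preimage[OF wS g_in[OF p(1)]] .
  have pq: "p < q" using later[OF q order.refl] p(3) q(2) by force
  show ?thesis
  proof (cases "q \<le> m \<or> g q \<le> w p")
    case True
    have "fits p (w q)" using q(2) p(2) unfolding fits_def by simp
    moreover have "fits q (w p)" using True p(3) g_less_head[OF p(1) pq] unfolding fits_def by auto
    ultimately show ?thesis using fitting_up_stepI[OF assms(1) p(1) q(1) pq] p(3) q(2) by auto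
  next
    case False
    then have qm: "m < q" "w p < g q" by auto
    have "g q < g p"
      using fit[OF q(1)] qm q g_inj[of q p] pq unfolding fits_def by force
    moreover obtain r where r: "r \<in> {1..n}" "w r = g q"
      using Sn_preimage[OF wS g_in[OF q(1)]] .
    moreover have "p < r" using later[OF r less_imp_le[OF pq]] qm(2) r(2) by force
    ultimately show ?thesis
      using exists_fitting_up_step_tail[OF assms(1) p(1,2) pq qm(1) q qm(2)] by blast
  qed
qed

lemma bruhat_le_g: "fitting w \<Longrightarrow> bruhat_le n w g"
proof (induction "weight n w" arbitrary: w rule: less_induct)
  case less
  show ?case
  proof (cases "w = g")
    case True
    then show ?thesis using bruhat_le.refl[OF g_Sn] by simp
  next
    case False
    then obtain i j where ij: "i \<in> {1..n}" "j \<in> {1..n}" "i < j" "w i < w j"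
      and fit: "fitting (w(i := w j, j := w i))"
      using exists_fitting_up_step[OF less.prems] unfolding fitting_up_step_def by blast
    have "bruhat_le n (w(i := w j, j := w i)) g"
      using less.hyps[OF weight_swap_less[OF ij] fit] .
    moreover have "bruhat_le n w (w(i := w j, j := w i))"
      using bruhat_le_swap[OF _ ij] less.prems unfolding fitting_def by blast
    ultimately show ?thesis by (rule bruhat_le_trans)
  qed
qed

lemma bruhat_interval_eq_fitting:
  "{w \<in> Sn n. bruhat_le n id w \<and> bruhat_le n w g} = {w. fitting w}"
  using bruhat_le_g fitting_bruhat_le[OF _ fitting_g] bruhat_le_id unfolding fitting_def by blast

end

locale shuffle =
  fixes n :: nat and J :: "nat set"
  assumes J_sub: "J \<subseteq> {1..n}"
begin

definition m :: nat where "m = card ({1..n} - J)"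
definition Jc_list :: "nat list" where "Jc_list = sorted_list_of_set ({1..n} - J)"
definition J_list :: "nat list" where "J_list = sorted_list_of_set J"

text \<open>\<open>sh\<close> lists \<open>h\<^sub>1, \<dots>, h\<^sub>n\<^sub>-\<^sub>k, j\<^sub>1, \<dots>, j\<^sub>k\<close> in one-line notation; it will turn out to be
  \<open>\<pi>(J)\<^sup>-\<^sup>1\<close>.\<close>
definition sh :: "nat \<Rightarrow> nat" where
  "sh a = (if a \<in> {1..n} then (Jc_list @ J_list) ! (a - 1) else a)"

lemma finite_J: "finite J"
  using J_sub finite_subset by blast

lemma m_plus_card_J: "m + card J = n"
  using J_sub finite_J card_mono[OF _ J_sub] unfolding m_def by (simp add: card_Diff_subset)

lemma length_Jc_list: "length Jc_list = m"
  unfolding Jc_list_def m_def by simp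

lemma length_J_list: "length J_list = card J"
  unfolding J_list_def by simp

lemma set_Jc_list: "set Jc_list = {1..n} - J"
  unfolding Jc_list_def by simp

lemma set_J_list: "set J_list = J"
  unfolding J_list_def using finite_J by simp

lemma sorted_Jc_list: "sorted_wrt (<) Jc_list"
  unfolding Jc_list_def by simp

lemma sorted_J_list: "sorted_wrt (<) J_list"
  unfolding J_list_def by simp

lemma sh_head: "a \<in> {1..n} \<Longrightarrow> a \<le> m \<Longrightarrow> sh a = Jc_list ! (a - 1)"
  unfolding sh_def using length_Jc_list by (auto simp: nth_append)

lemma sh_tail: "a \<in> {1..n} \<Longrightarrow> m < a \<Longrightarrow> sh a = J_list ! (a - 1 - m)"
  unfolding sh_def using length_Jc_list by (auto simp: nth_append)

lemma sh_head_notin_J: "a \<in> {1..n} \<Longrightarrow> a \<le> m \<Longrightarrow> sh a \<in> {1..n} - J"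
  using sh_head nth_mem[of "a - 1" Jc_list] length_Jc_list set_Jc_list by fastforce

lemma sh_tail_in_J: "a \<in> {1..n} \<Longrightarrow> m < a \<Longrightarrow> sh a \<in> J"
  using sh_tail nth_mem[of "a - 1 - m" J_list] length_J_list set_J_list m_plus_card_J by fastforce

lemma sh_permutes: "sh permutes {1..n}"
proof (rule bij_imp_permutes)
  let ?L = "Jc_list @ J_list"
  have "distinct ?L"
    using sorted_Jc_list sorted_J_list set_Jc_list set_J_list by (auto simp: strict_sorted_iff)
  moreover have "set ?L = {1..n}" using set_Jc_list set_J_list J_sub by auto
  moreover have "length ?L = n" using length_Jc_list length_J_list m_plus_card_J by simp
  ultimately have "bij_betw ((!) ?L) {..<n} {1..n}"
    using bij_betw_nth[of ?L "{..<n}" "{1..n}"] by simp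
  moreover have "bij_betw (\<lambda>a. a - 1) {1..n} {..<n}"
    by (rule bij_betw_byWitness[where f'="\<lambda>a. a + 1"]) auto
  ultimately have "bij_betw ((!) ?L \<circ> (\<lambda>a. a - 1)) {1..n} {1..n}"
    by (rule bij_betw_trans[rotated])
  then show "bij_betw sh {1..n} {1..n}"
    by (rule bij_betw_cong[THEN iffD1, rotated]) (simp add: sh_def)
qed (auto simp: sh_def)

lemma piJ_sh: "piJ n J (sh a) = a"
proof (cases "a \<in> {1..n}")
  case False
  then show ?thesis using J_sub unfolding piJ_def sh_def by auto
next
  case a: True
  show ?thesis
  proof (cases "a \<le> m")
    case True
    have "a - 1 < length Jc_list" using True a length_Jc_list by auto
    then have "card {y \<in> {1..n} - J. y \<le> sh a} = a"
      using card_le_nth_sorted[of Jc_list "a - 1"] sh_head[OF a True] set_Jc_list a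
      by (simp add: Jc_list_def)
    then show ?thesis using sh_head_notin_J[OF a True] unfolding piJ_def by simp
  next
    case False
    have "a - 1 - m < length J_list" using False a length_J_list m_plus_card_J by auto
    then have "card {y \<in> J. y \<le> sh a} = a - m"
      using card_le_nth_sorted[of J_list "a - 1 - m"] sh_tail[OF a] False set_J_list a
      by (simp add: J_list_def)
    then show ?thesis
      using sh_tail_in_J[OF a] False m_plus_card_J unfolding piJ_def by auto
  qed
qed

lemma inv_sh: "inv sh = piJ n J"
proof
  fix y
  have "piJ n J y = piJ n J (sh (inv sh y))" using permutes_inverses(1)[OF sh_permutes] by simp
  then show "inv sh y = piJ n J y" using piJ_sh by simp
qed

lemma inv_piJ: "inv (piJ n J) = sh"
  using inv_sh permutes_inv_inv[OF sh_permutes] by simp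

lemma piJ_permutes: "piJ n J permutes {1..n}"
  using inv_sh permutes_inv[OF sh_permutes] by simp

lemma sh_piJ: "sh (piJ n J y) = y"
  using inv_sh permutes_inverses(1)[OF sh_permutes] by metis

sublocale grassmannian n m sh
proof
  show "sh permutes {1..n}" by (rule sh_permutes)
  show "strict_mono_on {1..m} sh"
  proof (rule strict_mono_onI)
    fix a b :: nat assume "a \<in> {1..m}" "b \<in> {1..m}" "a < b"
    then show "sh a < sh b"
      using sh_head sorted_wrt_nth_less[OF sorted_Jc_list, of "a - 1" "b - 1"]
        length_Jc_list m_plus_card_J by auto
  qed
  show "strict_mono_on {m<..n} sh"
  proof (rule strict_mono_onI)
    fix a b :: nat assume "a \<in> {m<..n}" "b \<in> {m<..n}" "a < b"
    then show "sh a < sh b"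
      using sh_tail sorted_wrt_nth_less[OF sorted_J_list, of "a - 1 - m" "b - 1 - m"]
        length_J_list m_plus_card_J by auto
  qed
qed

lemma fitting_comp_sh: "z \<in> SJ n J \<Longrightarrow> fitting (z \<circ> sh)"
  using sh_head_notin_J sh_tail_in_J permutes_compose[OF sh_permutes]
  unfolding fitting_def fits_def SJ_def Sn_def by fastforce

lemma comp_piJ_in_SJ:
  assumes "fitting w"
  shows "w \<circ> piJ n J \<in> SJ n J"
proof -
  have w: "w \<in> Sn n" "\<And>a. a \<in> {1..n} \<Longrightarrow> fits a (w a)"
    using assms unfolding fitting_def by blast+
  have pin: "\<And>y. y \<in> {1..n} \<Longrightarrow> piJ n J y \<in> {1..n}"
    using permutes_in_image[OF piJ_permutes] by blast
  have "j \<le> w (piJ n J j)" if "j \<in> J" for j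
    using w(2)[OF pin] sh_head_notin_J[OF pin] sh_piJ that J_sub unfolding fits_def
    by (metis DiffD2 not_le subsetD)
  moreover have "w (piJ n J j) \<le> j" if "j \<in> {1..n} - J" for j
    using w(2)[OF pin] sh_tail_in_J[OF pin] sh_piJ that unfolding fits_def
    by (metis DiffE not_le)
  moreover have "w \<circ> piJ n J \<in> Sn n"
    using w(1) permutes_compose[OF piJ_permutes] unfolding Sn_def by blast
  ultimately show ?thesis unfolding SJ_def by simp
qed

lemma bij_SJ_interval:
  "bij_betw (\<lambda>z. z \<circ> sh) (SJ n J) {w \<in> Sn n. bruhat_le n id w \<and> bruhat_le n w sh}"
  unfolding bruhat_interval_eq_fitting
proof (rule bij_betw_byWitness[where f'="\<lambda>w. w \<circ> piJ n J"])
  show "\<forall>z\<in>SJ n J. z \<circ> sh \<circ> piJ n J = z" using sh_piJ by (auto simp: fun_eq_iff)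
  show "\<forall>w\<in>{w. fitting w}. w \<circ> piJ n J \<circ> sh = w" using piJ_sh by (auto simp: fun_eq_iff)
qed (use fitting_comp_sh comp_piJ_in_SJ in blast)+

lemma psi_altdef: "psi n J x = (\<lambda>i. if i \<in> {1..n} then x (sh i) else 0)"
  unfolding psi_def Let_def sh_def Jc_list_def J_list_def by auto

lemma psi_pt: "psi n J (pt n z) = pt n (z \<circ> sh)"
  unfolding psi_altdef pt_def using g_in by (auto simp: fun_eq_iff)

lemma psi_inj: "inj_on (psi n J) {x. \<forall>i. i \<notin> {1..n} \<longrightarrow> x i = 0}"
proof (rule inj_onI, rule ext)
  fix x y b
  assume x: "x \<in> {x. \<forall>i. i \<notin> {1..n} \<longrightarrow> x i = 0}" and y: "y \<in> {x. \<forall>i. i \<notin> {1..n} \<longrightarrow> x i = 0}"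
    and e: "psi n J x = psi n J y"
  show "x b = y b"
  proof (cases "b \<in> {1..n}")
    case True
    then have b: "piJ n J b \<in> {1..n}" using permutes_in_image[OF piJ_permutes] by blast
    have "psi n J x (piJ n J b) = psi n J y (piJ n J b)" using e by simp
    then show ?thesis using b unfolding psi_altdef sh_piJ by simp
  next
    case False
    then show ?thesis using x y by simp
  qed
qed

lemma psi_Br: "psi n J ` Br n J = Q n id sh"
proof -
  have "inj_on (psi n J) (pt n ` SJ n J)"
    by (rule inj_on_subset[OF psi_inj]) (auto simp: pt_def)
  then have "psi n J ` Br n J = convR (psi n J ` pt n ` SJ n J)"
    unfolding Br_def by (rule convR_image) (auto simp: psi_altdef fun_eq_iff)
  also have "psi n J ` pt n ` SJ n J = pt n ` (\<lambda>z. z \<circ> sh) ` SJ n J"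
    by (simp add: image_image psi_pt)
  finally show ?thesis
    using bij_SJ_interval unfolding Q_def bij_betw_def by simp
qed

lemma id_in_SJ: "id \<in> SJ n J"
  unfolding SJ_def Sn_def by (simp add: permutes_id)

lemma piJ_in_SJ: "piJ n J \<in> SJ n J"
proof -
  have "id \<in> Sn n" unfolding Sn_def by (simp add: permutes_id)
  then have "fitting id" using bruhat_interval_eq_fitting bruhat_le.refl bruhat_le_id[OF g_Sn] by blast
  then show ?thesis using comp_piJ_in_SJ by fastforce
qed

end

theorem lemma4p2:
  fixes n :: nat and J :: "nat set"
  assumes "J \<subseteq> {1..n}"
  shows "inj_on (psi n J) {x. \<forall>i. i \<notin> {1..n} \<longrightarrow> x i = 0}
    \<and> psi n J ` Br n J = Q n id (inv (piJ n J))
    \<and> (\<forall>z\<in>SJ n J. psi n J (pt n z) = pt n (z \<circ> inv (piJ n J)))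
    \<and> bij_betw (\<lambda>z. z \<circ> inv (piJ n J)) (SJ n J)
        {w \<in> Sn n. bruhat_le n id w \<and> bruhat_le n w (inv (piJ n J))}
    \<and> piJ n J \<in> SJ n J \<and> id \<in> SJ n J
    \<and> psi n J (pt n (piJ n J)) = pt n id
    \<and> psi n J (pt n id) = pt n (inv (piJ n J))"
proof -
  interpret shuffle n J using assms by unfold_locales
  have "psi n J (pt n (piJ n J)) = pt n id"
    using psi_pt[of "piJ n J"] piJ_sh by (simp add: comp_def id_def)
  moreover have "psi n J (pt n id) = pt n sh" using psi_pt[of id] by simp
  ultimately show ?thesis
    unfolding inv_piJ using psi_inj psi_Br psi_pt bij_SJ_interval piJ_in_SJ id_in_SJ by blast
qed

end
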